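(* Let $T$ be a bounded operator on a Hilbert space $\mathcal{H}$ with $\|T\|\le1$, let $K$ be a compact operator on $\mathcal{H}$ with dense range, and let $A$ be a bounded operator on $\mathcal{H}$ such that $TK=KA$. If $A^n\to0$ in the weak operator topology as $n\to\infty$, then $T$ is asymptotically stable, i.e. $\|T^nx\|\to0$ as $n\to\infty$ for every $x\in\mathcal{H}$. *)

theory Defs
  imports "HOL-Analysis.Analysis"
begin

text \<open>A (real) Hilbert space is a type of class real_inner and complete_space.
  A compact operator maps the closed unit ball to a relatively compact set.\<close>
definition compact_operator :: "('a::real_normed_vector \<Rightarrow> 'b::real_normed_vector) \<Rightarrow> bool" where
  "compact_operator K \<longleftrightarrow> bounded_linear K \<and> compact (closure (K ` cball 0 1))"

definition wot_tendsto_zero :: "(nat \<Rightarrow> 'a::real_inner \<Rightarrow> 'a) \<Rightarrow> bool" where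
  "wot_tendsto_zero S \<longleftrightarrow> (\<forall>x y. (\<lambda>n. inner (S n x) y) \<longlonglongrightarrow> 0)"

end

theory Submission
  imports Defs
begin

(* For y = K v the intertwining gives T^n y = K (A^n v). The orbit A^n v is weakly null, hence
   bounded by the uniform boundedness principle, and a compact operator maps weakly null
   sequences to norm null ones (the Riesz representation makes K weakly continuous). Thus
   T^n y tends to 0 on the dense range of K, and since all powers of T are contractions
   this extends to every x. *)

lemma Cauchy_if_dist_le_add:
  fixes X :: "nat \<Rightarrow> 'a::metric_space"
  assumes dist_le: "\<And>m n. dist (X m) (X n) \<le> d m + d n" and "d \<longlonglongrightarrow> 0"
  shows "Cauchy X"
proof (rule metric_CauchyI)
  fix e :: real assume "e > 0"
  then obtain N where N: "\<And>n. n \<ge> N \<Longrightarrow> \<bar>d n\<bar> < e / 2"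
    using LIMSEQ_D[OF \<open>d \<longlonglongrightarrow> 0\<close>, of "e / 2"] by auto
  have "dist (X m) (X n) < e" if "m \<ge> N" "n \<ge> N" for m n
    using dist_le[of m n] N[OF that(1)] N[OF that(2)] by linarith
  then show "\<exists>N. \<forall>m\<ge>N. \<forall>n\<ge>N. dist (X m) (X n) < e" by blast
qed

(* Dirichlet's principle: a minimiser u of this energy satisfies f = inner u, and completeness
   together with the parallelogram law makes minimising sequences converge. *)
definition riesz_energy :: "('a::real_inner \<Rightarrow> real) \<Rightarrow> 'a \<Rightarrow> real" where
  "riesz_energy f w = (norm w)\<^sup>2 / 2 - f w"

lemma riesz_energy_parallelogram:
  assumes "linear f"
  shows "(norm (x - y))\<^sup>2
    = 4 * (riesz_energy f x + riesz_energy f y - 2 * riesz_energy f ((x + y) /\<^sub>R 2))"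
  using assms unfolding riesz_energy_def
  by (simp add: linear_add linear_scale power2_norm_eq_inner inner_diff_left inner_diff_right
      inner_add_left inner_add_right inner_commute algebra_simps divide_simps)

lemma riesz_energy_bdd_below:
  assumes "bounded_linear f"
  shows "bdd_below (range (riesz_energy f))"
proof -
  obtain C where C: "\<And>x. \<bar>f x\<bar> \<le> norm x * C"
    using bounded_linear.bounded[OF assms] by (metis real_norm_def)
  have "- C\<^sup>2 / 2 \<le> riesz_energy f w" for w
  proof -
    have "0 \<le> (norm w - C)\<^sup>2" by simp
    then show ?thesis
      using C[of w] unfolding riesz_energy_def by (simp add: power2_eq_square algebra_simps)
  qed
  then show ?thesis by (rule bdd_belowI2)
qed

lemma riesz_energy_minimizing_Cauchy:
  assumes "linear f" and m_le: "\<And>w. m \<le> riesz_energy f w"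
    and a: "\<And>n. riesz_energy f (a n) < m + (1 / Suc n)\<^sup>2"
  shows "Cauchy a"
proof (rule Cauchy_if_dist_le_add)
  let ?E = "riesz_energy f"
  show "dist (a n) (a k) \<le> 2 / Suc n + 2 / Suc k" for n k
  proof -
    have "?E (a n) + ?E (a k) - 2 * ?E ((a n + a k) /\<^sub>R 2) \<le> (1 / Suc n)\<^sup>2 + (1 / Suc k)\<^sup>2"
      using a[of n] a[of k] m_le[of "(a n + a k) /\<^sub>R 2"] by linarith
    then have "(norm (a n - a k))\<^sup>2 \<le> 4 * ((1 / Suc n)\<^sup>2 + (1 / Suc k)\<^sup>2)"
      unfolding riesz_energy_parallelogram[OF \<open>linear f\<close>] by simp
    also have "\<dots> \<le> (2 / Suc n + 2 / Suc k)\<^sup>2"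
      using mult_nonneg_nonneg[of "1 / Suc n" "1 / Suc k"]
      by (simp add: power2_eq_square algebra_simps)
    finally show ?thesis
      unfolding dist_norm by (rule power2_le_imp_le) simp
  qed
  show "(\<lambda>n. 2 / real (Suc n)) \<longlonglongrightarrow> 0"
    using tendsto_mult_right_zero[OF LIMSEQ_inverse_real_of_nat, of 2]
    by (simp add: inverse_eq_divide)
qed

lemma riesz_energy_has_minimizer:
  fixes f :: "'a::{real_inner, complete_space} \<Rightarrow> real"
  assumes f: "bounded_linear f"
  obtains u where "\<And>w. riesz_energy f u \<le> riesz_energy f w"
proof -
  let ?E = "riesz_energy f"
  define m where "m = Inf (range ?E)"
  have bdd: "bdd_below (range ?E)" by (rule riesz_energy_bdd_below[OF f])
  have m_le: "m \<le> ?E w" for w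
    unfolding m_def using bdd by (rule cInf_lower[rotated]) simp
  have "\<exists>a. ?E a < m + (1 / Suc n)\<^sup>2" for n
  proof -
    have "Inf (range ?E) < m + (1 / Suc n)\<^sup>2" unfolding m_def by simp
    then show ?thesis using cInf_less_iff[OF _ bdd] by auto
  qed
  then obtain a where a: "\<And>n. ?E (a n) < m + (1 / Suc n)\<^sup>2" by metis
  have "Cauchy a"
    using bounded_linear.linear[OF f] m_le a by (rule riesz_energy_minimizing_Cauchy)
  then obtain u where "a \<longlonglongrightarrow> u" using Cauchy_convergent_iff convergent_def by blast
  then have lower: "(\<lambda>n. ?E (a n)) \<longlonglongrightarrow> ?E u"
    unfolding riesz_energy_def by (intro tendsto_intros bounded_linear.tendsto[OF f]) auto
  have upper: "(\<lambda>n. m + (1 / Suc n)\<^sup>2) \<longlonglongrightarrow> m"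
    using tendsto_add[OF tendsto_const tendsto_power[OF LIMSEQ_inverse_real_of_nat, of 2]]
    by (simp add: inverse_eq_divide)
  have "\<forall>\<^sub>F n in sequentially. ?E (a n) \<le> m + (1 / Suc n)\<^sup>2"
    by (intro always_eventually allI less_imp_le a)
  with trivial_limit_sequentially upper lower have "?E u \<le> m" by (rule tendsto_le)
  then show ?thesis using that m_le order_trans by blast
qed

lemma linear_plus_quadratic_nonneg_imp_zero:
  fixes c q :: real
  assumes "q \<ge> 0" and nonneg: "\<And>t. 0 \<le> t * c + t\<^sup>2 * q"
  shows "c = 0"
proof -
  define s where "s = 1 / (q + 1)"
  have "s > 0" "s * q < 1" unfolding s_def using \<open>q \<ge> 0\<close> by auto
  have "0 \<le> (- s * c) * c + (- s * c)\<^sup>2 * q" by (rule nonneg)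
  also have "\<dots> = - (s * (1 - s * q) * c\<^sup>2)" by (simp add: power2_eq_square algebra_simps)
  finally have "s * (1 - s * q) * c\<^sup>2 \<le> 0" by linarith
  moreover have "s * (1 - s * q) > 0" using \<open>s > 0\<close> \<open>s * q < 1\<close> by simp
  ultimately have "c\<^sup>2 \<le> 0" using mult_le_cancel_left_pos[of "s * (1 - s * q)" "c\<^sup>2" 0] by simp
  then show ?thesis by simp
qed

lemma riesz_energy_minimizer_represents:
  fixes f :: "'a::real_inner \<Rightarrow> real"
  assumes "linear f" and min: "\<And>w. riesz_energy f u \<le> riesz_energy f w"
  shows "f w = inner u w"
proof -
  have "riesz_energy f (u + t *\<^sub>R w)
      = riesz_energy f u + t * (inner u w - f w) + t\<^sup>2 * ((norm w)\<^sup>2 / 2)" for t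
    using \<open>linear f\<close> unfolding riesz_energy_def power2_norm_eq_inner
    by (simp add: linear_add linear_scale inner_add_left inner_add_right inner_commute
        power2_eq_square algebra_simps)
  then have "0 \<le> t * (inner u w - f w) + t\<^sup>2 * ((norm w)\<^sup>2 / 2)" for t
    using min[of "u + t *\<^sub>R w"] by simp
  then have "inner u w - f w = 0" by (rule linear_plus_quadratic_nonneg_imp_zero[rotated]) simp
  then show ?thesis by simp
qed

theorem bounded_linear_inner_representation:
  fixes f :: "'a::{real_inner, complete_space} \<Rightarrow> real"
  assumes "bounded_linear f"
  obtains u where "\<And>w. f w = inner u w"
  using riesz_energy_has_minimizer[OF assms]
    riesz_energy_minimizer_represents[OF bounded_linear.linear[OF assms]]
  by metis

lemma closed_cover_contains_ball:
  fixes C :: "nat \<Rightarrow> 'a::complete_space set"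
  assumes closed: "\<And>k. closed (C k)" and cover: "(\<Union>k. C k) = UNIV"
  obtains k w r where "r > 0" and "ball w r \<subseteq> C k"
proof -
  have "\<exists>k. interior (C k) \<noteq> {}"
  proof (rule ccontr)
    assume "\<nexists>k. interior (C k) \<noteq> {}"
    then have "euclidean interior_of (\<Union>k. C k) = {}"
      using closed closed_closedin completely_metrizable_space_euclidean
      by (intro Baire_category_alt) auto
    then show False using cover by simp
  qed
  then obtain k w where "w \<in> interior (C k)" by blast
  then show thesis using that by (meson mem_interior)
qed

lemma weakly_Bseq_imp_Bseq:
  fixes z :: "nat \<Rightarrow> 'a::{real_inner, complete_space}"
  assumes weak: "\<And>w. Bseq (\<lambda>n. inner (z n) w)"
  shows "Bseq z"
proof -
  define C where "C k = {w. \<forall>n. \<bar>inner (z n) w\<bar> \<le> real k}" for k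
  have "closed (C k)" for k
    unfolding C_def Collect_all_eq by (intro closed_INT ballI closed_Collect_le continuous_intros)
  moreover have "(\<Union>k. C k) = UNIV"
  proof -
    have "\<exists>k. w \<in> C k" for w
    proof -
      obtain B where B: "\<And>n. \<bar>inner (z n) w\<bar> \<le> B" using weak[of w] unfolding Bseq_def by auto
      obtain k :: nat where "B \<le> real k" using real_arch_simple by blast
      then have "\<bar>inner (z n) w\<bar> \<le> real k" for n using B[of n] by linarith
      then show ?thesis unfolding C_def by blast
    qed
    then show ?thesis by blast
  qed
  ultimately obtain k w0 r where "r > 0" and ball: "ball w0 r \<subseteq> C k"
    by (rule closed_cover_contains_ball)
  have bound: "\<bar>inner (z n) v\<bar> \<le> 2 * k" if "norm v < r" for n v
  proof -
    have "w0 + v \<in> ball w0 r" "w0 \<in> ball w0 r" using that \<open>r > 0\<close> by (simp_all add: dist_norm)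
    then have "w0 + v \<in> C k" "w0 \<in> C k" using ball by blast+
    then have "\<bar>inner (z n) (w0 + v)\<bar> \<le> k" "\<bar>inner (z n) w0\<bar> \<le> k" unfolding C_def by blast+
    then show ?thesis unfolding inner_add_right by linarith
  qed
  have "r / 2 * norm (z n) \<le> 2 * k" for n
  proof (cases "z n = 0")
    case False
    define v where "v = (r / 2 / norm (z n)) *\<^sub>R z n"
    have "norm v < r" unfolding v_def using False \<open>r > 0\<close> by simp
    moreover have "inner (z n) v = r / 2 * norm (z n)"
      unfolding v_def using False by (simp add: power2_norm_eq_inner[symmetric] power2_eq_square)
    ultimately show ?thesis using bound[of v n] by simp
  qed simp
  then have "norm (z n) \<le> 4 * k / r" for n using \<open>r > 0\<close> by (simp add: pos_le_divide_eq mult.commute)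
  then show ?thesis by (rule BseqI')
qed

lemma weakly_null_in_compact_imp_tendsto_zero:
  fixes y :: "nat \<Rightarrow> 'a::real_inner"
  assumes "compact S" and "\<And>n. y n \<in> S" and weak: "\<And>v. (\<lambda>n. inner (y n) v) \<longlonglongrightarrow> 0"
  shows "y \<longlonglongrightarrow> 0"
proof (rule ccontr)
  assume "\<not> y \<longlonglongrightarrow> 0"
  then obtain e where "e > 0" and "frequently (\<lambda>n. e \<le> norm (y n)) sequentially"
    unfolding tendsto_iff frequently_def by (auto simp: not_le)
  then have "infinite {n. e \<le> norm (y n)}"
    by (simp add: frequently_cofinite[symmetric] cofinite_eq_sequentially)
  then obtain r :: "nat \<Rightarrow> nat" where r: "strict_mono r" and far: "\<And>j. e \<le> norm (y (r j))"
    using infinite_enumerate by blast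
  have "\<forall>j. (y \<circ> r) j \<in> S" using assms(2) by simp
  then obtain v s where "v \<in> S" and s: "strict_mono s" and lim: "(y \<circ> r \<circ> s) \<longlonglongrightarrow> v"
    by (rule seq_compactE[OF compact_imp_seq_compact[OF \<open>compact S\<close>]])
  have "e \<le> norm v"
    by (rule tendsto_lowerbound[OF tendsto_norm[OF lim]]) (simp_all add: far)
  moreover have "inner v v = 0"
  proof (rule LIMSEQ_unique)
    show "(\<lambda>j. inner ((y \<circ> r \<circ> s) j) v) \<longlonglongrightarrow> inner v v" by (intro tendsto_intros lim)
    show "(\<lambda>j. inner ((y \<circ> r \<circ> s) j) v) \<longlonglongrightarrow> 0"
      using LIMSEQ_subseq_LIMSEQ[OF weak strict_mono_o[OF r s]] by (simp add: o_def)
  qed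
  ultimately show False using \<open>e > 0\<close> by simp
qed

lemma compact_operator_compact_closure_image:
  fixes K :: "'a::real_normed_vector \<Rightarrow> 'b::real_normed_vector"
  assumes "compact_operator K" and "bounded S"
  shows "compact (closure (K ` S))"
proof -
  have K: "bounded_linear K" and cpt: "compact (closure (K ` cball 0 1))"
    using assms(1) unfolding compact_operator_def by auto
  obtain b where "b > 0" and b: "\<forall>x\<in>S. norm x \<le> b"
    using assms(2) unfolding bounded_pos by blast
  define B where "B = scaleR b ` closure (K ` cball 0 1)"
  have "compact B" unfolding B_def by (rule compact_scaling[OF cpt])
  have "K ` S \<subseteq> B"
  proof
    fix y assume "y \<in> K ` S"
    then obtain x where "x \<in> S" and "y = K x" by blast
    then have "norm x \<le> b" using b by blast
    then have "x /\<^sub>R b \<in> cball 0 1" using \<open>b > 0\<close> by (simp add: field_simps)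
    moreover have "y = b *\<^sub>R K (x /\<^sub>R b)"
      using \<open>y = K x\<close> \<open>b > 0\<close> K by (simp add: linear_simps)
    ultimately show "y \<in> B" unfolding B_def using closure_subset by blast
  qed
  then have "closure (K ` S) \<subseteq> B" using compact_imp_closed[OF \<open>compact B\<close>] by (rule closure_minimal)
  moreover have "compact (B \<inter> closure (K ` S))"
    by (rule compact_Int_closed[OF \<open>compact B\<close> closed_closure])
  ultimately show ?thesis by (simp add: Int_absorb1)
qed

lemma compact_operator_weakly_null_imp_tendsto_zero:
  fixes K :: "'a::{real_inner, complete_space} \<Rightarrow> 'b::real_inner"
  assumes "compact_operator K" and weak: "\<And>w. (\<lambda>n. inner (z n) w) \<longlonglongrightarrow> 0"
  shows "(\<lambda>n. K (z n)) \<longlonglongrightarrow> 0"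
proof -
  have "Bseq (\<lambda>n. inner (z n) w)" for w
    using weak[of w] by (intro convergent_imp_Bseq convergentI)
  then have "bounded (range z)" unfolding Bseq_eq_bounded[symmetric] by (rule weakly_Bseq_imp_Bseq)
  then have "compact (closure (K ` range z))"
    using assms(1) by (rule compact_operator_compact_closure_image[rotated])
  moreover have "K (z n) \<in> closure (K ` range z)" for n by (rule closure_subset[THEN subsetD]) simp
  moreover have "(\<lambda>n. inner (K (z n)) v) \<longlonglongrightarrow> 0" for v
  proof -
    have "bounded_linear K" using assms(1) unfolding compact_operator_def by (rule conjunct1)
    then have "bounded_linear (\<lambda>w. inner (K w) v)"
      by (rule bounded_linear_compose[OF bounded_linear_inner_left])
    then obtain u where "\<And>w. inner (K w) v = inner u w"
      using bounded_linear_inner_representation by blast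
    then show ?thesis using weak[of u] by (simp add: inner_commute)
  qed
  ultimately show ?thesis by (rule weakly_null_in_compact_imp_tendsto_zero)
qed

lemma onorm_le_one_imp_nonexpansive:
  fixes T :: "'a::real_normed_vector \<Rightarrow> 'b::real_normed_vector"
  assumes "bounded_linear T" and "onorm T \<le> 1"
  shows "dist (T x) (T y) \<le> dist x y"
proof -
  have "dist (T x) (T y) = norm (T (x - y))" using assms(1) by (simp add: dist_norm linear_simps)
  also have "\<dots> \<le> onorm T * norm (x - y)" by (rule onorm[OF assms(1)])
  also have "\<dots> \<le> norm (x - y)" using assms(2) by (simp add: mult_left_le_one_le onorm_pos_le[OF assms(1)])
  finally show ?thesis by (simp add: dist_norm)
qed

lemma dist_funpow_le:
  fixes T :: "'a::metric_space \<Rightarrow> 'a"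
  assumes "\<And>x y. dist (T x) (T y) \<le> dist x y"
  shows "dist ((T ^^ n) x) ((T ^^ n) y) \<le> dist x y"
proof (induction n)
  case (Suc n)
  have "dist (T ((T ^^ n) x)) (T ((T ^^ n) y)) \<le> dist ((T ^^ n) x) ((T ^^ n) y)" by (rule assms)
  then show ?case using Suc.IH by simp
qed simp

lemma funpow_intertwine:
  assumes "T \<circ> K = K \<circ> A"
  shows "(T ^^ n) (K y) = K ((A ^^ n) y)"
  by (induction n) (use assms in \<open>simp_all add: fun_eq_iff\<close>)

lemma nonexpansive_tendsto_zero_closure:
  fixes F :: "nat \<Rightarrow> 'a::metric_space \<Rightarrow> 'b::real_normed_vector"
  assumes nonexp: "\<And>n x y. dist (F n x) (F n y) \<le> dist x y"
    and dense: "\<And>y. y \<in> S \<Longrightarrow> (\<lambda>n. F n y) \<longlonglongrightarrow> 0" and "x \<in> closure S"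
  shows "(\<lambda>n. F n x) \<longlonglongrightarrow> 0"
proof (rule LIMSEQ_I)
  fix e :: real assume "e > 0"
  then obtain y where "y \<in> S" and "dist y x < e / 2"
    using \<open>x \<in> closure S\<close> unfolding closure_approachable by (meson half_gt_zero)
  then obtain N where N: "\<And>n. n \<ge> N \<Longrightarrow> norm (F n y) < e / 2"
    using LIMSEQ_D[OF dense, of y "e / 2"] \<open>e > 0\<close> by auto
  have "norm (F n x - 0) < e" if "n \<ge> N" for n
  proof -
    have "norm (F n x) \<le> norm (F n y) + dist (F n x) (F n y)"
      unfolding dist_norm by (rule norm_triangle_sub)
    also have "\<dots> < e / 2 + e / 2"
      using nonexp[of n x y] \<open>dist y x < e / 2\<close> N[OF that] by (simp add: dist_commute)
    finally show ?thesis by simp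
  qed
  then show "\<exists>N. \<forall>n\<ge>N. norm (F n x - 0) < e" by blast
qed

theorem lemma3p2:
  fixes T K A :: "'a::{real_inner, complete_space} \<Rightarrow> 'a"
  assumes "bounded_linear T" and "onorm T \<le> 1"
    and "compact_operator K" and "closure (range K) = UNIV"
    and "bounded_linear A"
    and "T \<circ> K = K \<circ> A"
    and "wot_tendsto_zero (\<lambda>n. A ^^ n)"
  shows "\<forall>x. (\<lambda>n. norm ((T ^^ n) x)) \<longlonglongrightarrow> 0"
proof
  fix x
  have "dist ((T ^^ n) a) ((T ^^ n) b) \<le> dist a b" for n a b
    using onorm_le_one_imp_nonexpansive[OF assms(1,2)] by (rule dist_funpow_le)
  moreover have "(\<lambda>n. (T ^^ n) y) \<longlonglongrightarrow> 0" if y: "y \<in> range K" for y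
  proof -
    obtain v where "y = K v" using y by blast
    have "(\<lambda>n. inner ((A ^^ n) v) w) \<longlonglongrightarrow> 0" for w
      using assms(7) unfolding wot_tendsto_zero_def by blast
    then have "(\<lambda>n. K ((A ^^ n) v)) \<longlonglongrightarrow> 0"
      by (rule compact_operator_weakly_null_imp_tendsto_zero[OF assms(3)])
    then show ?thesis unfolding \<open>y = K v\<close> funpow_intertwine[OF assms(6)] .
  qed
  moreover have "x \<in> closure (range K)" using assms(4) by simp
  ultimately have "(\<lambda>n. (T ^^ n) x) \<longlonglongrightarrow> 0"
    by (rule nonexpansive_tendsto_zero_closure)
  then show "(\<lambda>n. norm ((T ^^ n) x)) \<longlonglongrightarrow> 0" by (rule tendsto_norm_zero)
qed

end
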